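(* Let $k\ge 2$, $n=2^k$, and let $P$ be an isothetic drawing of the Horton set of $n$ points, with tree $T$, first level $T_1$ and slab $R$ as defined in the context. Then no two of the lines defined by the vertices of $T_1$ intersect inside $R$. Consequently, inside $R$ these lines are totally ordered from bottom to top, and this bottom-to-top order coincides with the left-to-right order of the corresponding vertices of $T_1$ in $T$.
   Context: For a finite set $S$ of points in the plane with pairwise distinct $x$-coordinates, list its points in increasing order of $x$-coordinate as $p_0,\dots,p_{|S|-1}$ and set $S_{\mathrm{even}}=\{p_0,p_2,\dots\}$, $S_{\mathrm{odd}}=\{p_1,p_3,\dots\}$. For point sets $X,Y$, $X$ is high above $Y$ if every line through two points of $X$ lies strictly above every point of $Y$ and every line through two points of $Y$ lies strictly below every point of $X$. A Horton set of $2^k$ points is defined recursively: a set $H$ of $2^k$ points, no three collinear, with pairwise distinct $x$-coordinates, such that for $k=0$ it is a single point and for $k\ge1$ both $H_{\mathrm{even}}$ and $H_{\mathrm{odd}}$ are Horton sets of $2^{k-1}$ points and $H_{\mathrm{odd}}$ is high above $H_{\mathrm{even}}$. An isothetic drawing of the Horton set of $n=2^k$ points is a Horton set of $n$ points all of whose points have integer coordinates. Let $P$ be such a set, with points $p_0,\dots,p_{n-1}$ sorted by $x$-coordinate. The tree $T$ is the complete rooted binary tree with root $P$ in which every vertex $Q$ with at least two points has left child $Q_{\mathrm{even}}$ and right child $Q_{\mathrm{odd}}$ (taken with respect to the $x$-order of $Q$). The left-to-right order of vertices of a given level of $T$ is their order in the standard planar drawing of $T$ in which each left child is placed before its sibling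 right child. For $0\le i\le k$, the $i$-th level $T_i$ is the set of vertices of $T$ consisting of exactly $2^i$ points. Each vertex of $T_1$ is a pair of points, and the line through them is called the line defined by that vertex. $R$ is the closed vertical slab bounded by the vertical lines through $p_{n/4}$ and $p_{3n/4-1}$. *)

theory Defs
  imports Complex_Main
begin

type_synonym point = "real \<times> real"

definition xsorted :: "point set \<Rightarrow> point list" where
  "xsorted S = sorted_key_list_of_set fst S"

definition distinct_x :: "point set \<Rightarrow> bool" where
  "distinct_x S \<longleftrightarrow> inj_on fst S"

definition even_part :: "point set \<Rightarrow> point set" where
  "even_part S = {xsorted S ! i | i. i < card S \<and> even i}"

definition odd_part :: "point set \<Rightarrow> point set" where
  "odd_part S = {xsorted S ! i | i. i < card S \<and> odd i}"

definition collinear3 :: "point \<Rightarrow> point \<Rightarrow> point \<Rightarrow> bool" where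
  "collinear3 p q r \<longleftrightarrow>
     (fst q - fst p) * (snd r - snd p) - (snd q - snd p) * (fst r - fst p) = 0"

definition no_three_collinear :: "point set \<Rightarrow> bool" where
  "no_three_collinear S \<longleftrightarrow>
     (\<forall>p\<in>S. \<forall>q\<in>S. \<forall>r\<in>S. p \<noteq> q \<and> p \<noteq> r \<and> q \<noteq> r \<longrightarrow> \<not> collinear3 p q r)"

definition line_val :: "point \<Rightarrow> point \<Rightarrow> real \<Rightarrow> real" where
  "line_val p q x = snd p + (snd q - snd p) / (fst q - fst p) * (x - fst p)"

text \<open>X is high above Y (for point sets with pairwise distinct x-coordinates, so
  all lines considered are non-vertical).\<close>
definition high_above :: "point set \<Rightarrow> point set \<Rightarrow> bool" where
  "high_above X Y \<longleftrightarrow>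
     (\<forall>p\<in>X. \<forall>q\<in>X. p \<noteq> q \<longrightarrow> (\<forall>y\<in>Y. snd y < line_val p q (fst y))) \<and>
     (\<forall>p\<in>Y. \<forall>q\<in>Y. p \<noteq> q \<longrightarrow> (\<forall>x\<in>X. line_val p q (fst x) < snd x))"

fun horton :: "nat \<Rightarrow> point set \<Rightarrow> bool" where
  "horton 0 H \<longleftrightarrow> card H = 1"
| "horton (Suc k) H \<longleftrightarrow>
     finite H \<and> card H = 2 ^ Suc k \<and> no_three_collinear H \<and> distinct_x H \<and>
     horton k (even_part H) \<and> horton k (odd_part H) \<and>
     high_above (odd_part H) (even_part H)"

text \<open>Vertices of the tree T at depth d below Q, in left-to-right order
  (left child = even part, right child = odd part).\<close>
fun tree_level :: "point set \<Rightarrow> nat \<Rightarrow> point set list" where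
  "tree_level Q 0 = [Q]"
| "tree_level Q (Suc d) = tree_level (even_part Q) d @ tree_level (odd_part Q) d"

definition vertex_line :: "point set \<Rightarrow> real \<Rightarrow> real" where
  "vertex_line V x = line_val (xsorted V ! 0) (xsorted V ! 1) x"

end

theory Submission
  imports Defs
begin

text \<open>Enumerate the points as \<open>f 0, \<dots>, f (n - 1)\<close> by increasing abscissa. The even and odd
  parts are then \<open>f (2 * i)\<close> and \<open>f (2 * i + 1)\<close>, and level \<open>d\<close> of the tree is level \<open>d - 1\<close> of
  the even part followed by level \<open>d - 1\<close> of the odd part, each ordered inside the slab by
  induction. It remains to show that the line of the last vertex of the even part lies below
  the line of the first vertex of the odd part. As the odd part is high above the even part,
  the difference of these two lines is an affine function that is positive at the abscissae
  of all four defining points, hence between them; and these four points reach into the first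
  and the last quarter of the points, so they span the slab.\<close>

lemma (in linorder) sorted_key_list_of_set_eq_iff:
  assumes "inj_on f A" "finite A"
  shows "sorted_key_list_of_set f A = l \<longleftrightarrow>
           sorted_wrt (<) (map f l) \<and> set l = A \<and> length l = card A"
proof -
  interpret F: folding_insort_key "(\<le>)" "(<)" A f
    by unfold_locales (rule assms(1))
  show ?thesis by (rule sym[OF F.sorted_key_list_of_set_unique[OF subset_refl assms(2)]])
qed

lemma xsorted_eq_iff:
  "finite S \<Longrightarrow> distinct_x S \<Longrightarrow>
   xsorted S = l \<longleftrightarrow> sorted_wrt (<) (map fst l) \<and> set l = S \<and> length l = card S"
  unfolding xsorted_def distinct_x_def by (rule sorted_key_list_of_set_eq_iff)

lemma card_image_fst_strict_mono:
  fixes f :: "nat \<Rightarrow> 'a::linorder \<times> 'b"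
  assumes "strict_mono_on {..<m} (fst \<circ> f)"
  shows "card (f ` {..<m}) = m"
  using card_image[OF inj_on_imageI2[OF strict_mono_on_imp_inj_on[OF assms]]] by simp

lemma xsorted_image:
  assumes "strict_mono_on {..<m} (fst \<circ> f)"
  shows "xsorted (f ` {..<m}) = map f [0..<m]"
proof -
  have "distinct_x (f ` {..<m})"
    unfolding distinct_x_def using assms by (intro inj_on_imageI strict_mono_on_imp_inj_on)
  moreover have "sorted_wrt (<) (map fst (map f [0..<m]))"
    using strict_mono_onD[OF assms] by (auto simp: sorted_wrt_iff_nth_less)
  ultimately show ?thesis
    using assms by (subst xsorted_eq_iff) (auto simp: card_image_fst_strict_mono atLeast0LessThan)
qed

lemma sorted_wrt_less_hd_last:
  fixes xs :: "'a::linorder list"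
  assumes "sorted_wrt (<) xs" "y \<in> set xs"
  shows "hd xs \<le> y" "y \<le> last xs"
proof -
  show "hd xs \<le> y" using assms by (cases xs) auto
  obtain ys z where "xs = ys @ [z]" using assms(2) by (cases xs rule: rev_cases) auto
  then show "y \<le> last xs" using assms by (auto simp: sorted_wrt_append less_imp_le)
qed

lemma even_part_image:
  fixes f :: "nat \<Rightarrow> point"
  assumes "strict_mono_on {..<2*h} (fst \<circ> f)"
  shows "even_part (f ` {..<2*h}) = (\<lambda>i. f (2*i)) ` {..<h}"
  unfolding even_part_def xsorted_image[OF assms] card_image_fst_strict_mono[OF assms]
proof (intro set_eqI iffI)
  fix y assume "y \<in> {map f [0..<2*h] ! i |i. i < 2*h \<and> even i}"
  then show "y \<in> (\<lambda>i. f (2*i)) ` {..<h}" by (auto elim!: evenE)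
next
  fix y assume "y \<in> (\<lambda>i. f (2*i)) ` {..<h}"
  then obtain j where "j < h" "y = f (2*j)" by auto
  then show "y \<in> {map f [0..<2*h] ! i |i. i < 2*h \<and> even i}"
    by (intro CollectI exI[of _ "2*j"]) auto
qed

lemma odd_part_image:
  fixes f :: "nat \<Rightarrow> point"
  assumes "strict_mono_on {..<2*h} (fst \<circ> f)"
  shows "odd_part (f ` {..<2*h}) = (\<lambda>i. f (2*i+1)) ` {..<h}"
  unfolding odd_part_def xsorted_image[OF assms] card_image_fst_strict_mono[OF assms]
proof (intro set_eqI iffI)
  fix y assume "y \<in> {map f [0..<2*h] ! i |i. i < 2*h \<and> odd i}"
  then show "y \<in> (\<lambda>i. f (2*i+1)) ` {..<h}" by (auto elim!: oddE)
next
  fix y assume "y \<in> (\<lambda>i. f (2*i+1)) ` {..<h}"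
  then obtain j where "j < h" "y = f (2*j+1)" by auto
  then show "y \<in> {map f [0..<2*h] ! i |i. i < 2*h \<and> odd i}"
    by (intro CollectI exI[of _ "2*j+1"]) auto
qed

lemma strict_mono_on_evens:
  fixes f :: "nat \<Rightarrow> 'a::order \<times> 'b"
  assumes "strict_mono_on {..<2*h} (fst \<circ> f)"
  shows "strict_mono_on {..<h} (fst \<circ> (\<lambda>i. f (2*i)))"
  by (rule strict_mono_onI) (use strict_mono_onD[OF assms] in auto)

lemma strict_mono_on_odds:
  fixes f :: "nat \<Rightarrow> 'a::order \<times> 'b"
  assumes "strict_mono_on {..<2*h} (fst \<circ> f)"
  shows "strict_mono_on {..<h} (fst \<circ> (\<lambda>i. f (2*i+1)))"
  by (rule strict_mono_onI) (use strict_mono_onD[OF assms] in auto)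

lemma tree_level_image_Suc:
  fixes f :: "nat \<Rightarrow> point"
  assumes "strict_mono_on {..<2*h} (fst \<circ> f)"
  shows "tree_level (f ` {..<2*h}) (Suc d)
           = tree_level ((\<lambda>i. f (2*i)) ` {..<h}) d @ tree_level ((\<lambda>i. f (2*i+1)) ` {..<h}) d"
  using assms by (simp add: even_part_image odd_part_image)

lemma length_tree_level [simp]: "length (tree_level Q d) = 2^d"
  by (induction d arbitrary: Q) auto

lemma tree_level_nonempty [simp]: "tree_level Q d \<noteq> []"
  by (induction d arbitrary: Q) auto

lemma tree_level_hd_last:
  fixes f :: "nat \<Rightarrow> point"
  assumes "strict_mono_on {..<2^Suc d} (fst \<circ> f)"
  shows "hd (tree_level (f ` {..<2^Suc d}) d) = {f 0, f (2^d)} \<and>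
         last (tree_level (f ` {..<2^Suc d}) d) = {f (2^d - 1), f (2^Suc d - 1)}"
  using assms
proof (induction d arbitrary: f)
  case 0
  have "f ` {..<2} = {f 0, f 1}" by (auto simp: numeral_2_eq_2 lessThan_Suc)
  then show ?case by simp
next
  case (Suc d)
  have mono: "strict_mono_on {..<2 * 2^Suc d} (fst \<circ> f)"
    using Suc.prems unfolding power_Suc[of 2 "Suc d"] .
  have double_pred: "Suc (2 * (m - Suc 0)) = 2 * m - Suc 0" if "0 < m" for m :: nat
    using that by simp
  show ?case
    using tree_level_image_Suc[OF mono]
      Suc.IH[OF strict_mono_on_evens[OF mono]] Suc.IH[OF strict_mono_on_odds[OF mono]]
    by (simp add: double_pred)
qed

lemma vertex_line_pair:
  assumes "fst p < fst q"
  shows "vertex_line {p, q} x = line_val p q x"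
proof -
  have "xsorted {p, q} = [p, q]"
    using assms by (subst xsorted_eq_iff) (auto simp: distinct_x_def card_insert_if)
  then show ?thesis by (simp add: vertex_line_def)
qed

lemma line_val_left [simp]: "line_val p q (fst p) = snd p"
  by (simp add: line_val_def)

lemma line_val_right: "fst p \<noteq> fst q \<Longrightarrow> line_val p q (fst q) = snd q"
  by (simp add: line_val_def)

lemma line_val_affine:
  "line_val p q t = line_val p q 0 + (snd q - snd p) / (fst q - fst p) * t"
  unfolding line_val_def by (simp add: right_diff_distrib)

lemma affine_pos_between:
  fixes c0 c1 u v x :: real
  assumes "0 < c0 + c1 * u" "0 < c0 + c1 * v" "u \<le> x" "x \<le> v"
  shows "0 < c0 + c1 * x"
proof (cases "0 \<le> c1")
  case True
  then have "c1 * u \<le> c1 * x" using assms(3) by (simp add: mult_left_mono)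
  then show ?thesis using assms(1) by linarith
next
  case False
  then have "c1 * v \<le> c1 * x" using assms(4) by (simp add: mult_left_mono_neg)
  then show ?thesis using assms(2) by linarith
qed

lemma line_val_less_between:
  assumes "fst p \<noteq> fst q" "fst r \<noteq> fst s"
    and "snd p < line_val r s (fst p)" "snd q < line_val r s (fst q)"
    and "line_val p q (fst r) < snd r" "line_val p q (fst s) < snd s"
    and "u \<in> {fst p, fst q, fst r, fst s}" "v \<in> {fst p, fst q, fst r, fst s}" "u \<le> x" "x \<le> v"
  shows "line_val p q x < line_val r s x"
proof -
  define c0 where "c0 = line_val r s 0 - line_val p q 0"
  define c1 where "c1 = (snd s - snd r) / (fst s - fst r) - (snd q - snd p) / (fst q - fst p)"
  have diff: "line_val r s t - line_val p q t = c0 + c1 * t" for t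
    by (subst (1 2) line_val_affine) (simp add: c0_def c1_def algebra_simps)
  have pos: "0 < c0 + c1 * t" if "t \<in> {fst p, fst q, fst r, fst s}" for t
    using that assms(1-6) diff[of t] by (auto simp: line_val_right)
  have "0 < c0 + c1 * x"
    using affine_pos_between[OF pos pos] assms(7-10) by blast
  then show ?thesis using diff[of x] by linarith
qed

text \<open>A weakening of \<open>x \<in> R\<close> for the points \<open>f 0, \<dots>, f (n - 1)\<close>: \<open>x\<close> lies right of the first
  and left of the last quarter of them. Unlike \<open>R\<close> itself, this is inherited by both halves.\<close>

definition in_middle_slab :: "(nat \<Rightarrow> point) \<Rightarrow> nat \<Rightarrow> real \<Rightarrow> bool" where
  "in_middle_slab f n x \<longleftrightarrow>
     (\<forall>i<n. 4 * i < n \<longrightarrow> fst (f i) \<le> x) \<and> (\<forall>i<n. 3 * n \<le> 4 * i \<longrightarrow> x \<le> fst (f i))"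

lemma in_middle_slab_evens:
  "in_middle_slab f (2 * h) x \<Longrightarrow> in_middle_slab (\<lambda>i. f (2 * i)) h x"
  unfolding in_middle_slab_def by auto

lemma in_middle_slab_odds:
  "4 dvd h \<Longrightarrow> in_middle_slab f (2 * h) x \<Longrightarrow> in_middle_slab (\<lambda>i. f (2 * i + 1)) h x"
  unfolding in_middle_slab_def by (auto simp: dvd_def)

lemma in_middle_slab_if_between:
  assumes "strict_mono_on {..<n} (fst \<circ> f)" "4 dvd n"
    and "fst (f (n div 4)) \<le> x" "x \<le> fst (f (3 * n div 4 - 1))"
  shows "in_middle_slab f n x"
  unfolding in_middle_slab_def
proof (intro conjI allI impI)
  fix i assume "i < n" "4 * i < n"
  then have "fst (f i) \<le> fst (f (n div 4))"
    using assms(2) by (intro strict_mono_on_leD[OF assms(1), simplified]) (auto simp: dvd_def)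
  then show "fst (f i) \<le> x" using assms(3) by linarith
next
  fix i assume "i < n" "3 * n \<le> 4 * i"
  then have "fst (f (3 * n div 4 - 1)) \<le> fst (f i)"
    using assms(2) by (intro strict_mono_on_leD[OF assms(1), simplified]) (auto simp: dvd_def)
  then show "x \<le> fst (f i)" using assms(4) by linarith
qed

lemma last_even_line_below_first_odd_line:
  fixes f :: "nat \<Rightarrow> point"
  assumes mono: "strict_mono_on {..<2^Suc (Suc d)} (fst \<circ> f)"
    and horton: "horton (Suc (Suc d)) (f ` {..<2^Suc (Suc d)})"
    and slab: "in_middle_slab f (2^Suc (Suc d)) x"
  shows "vertex_line (last (tree_level ((\<lambda>i. f (2*i)) ` {..<2^Suc d}) d)) x
           < vertex_line (hd (tree_level ((\<lambda>i. f (2*i+1)) ` {..<2^Suc d}) d)) x"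
proof -
  have mono2: "strict_mono_on {..<2 * 2^Suc d} (fst \<circ> f)"
    using mono unfolding power_Suc[of 2 "Suc d"] .
  define e1 e2 o1 o2 where "e1 = f (2 * (2^d - 1))" and "e2 = f (2 * (2^Suc d - 1))"
    and "o1 = f 1" and "o2 = f (2 * 2^d + 1)"
  have last_eq: "last (tree_level ((\<lambda>i. f (2*i)) ` {..<2^Suc d}) d) = {e1, e2}"
    using tree_level_hd_last[OF strict_mono_on_evens[OF mono2]] by (simp add: e1_def e2_def)
  have hd_eq: "hd (tree_level ((\<lambda>i. f (2*i+1)) ` {..<2^Suc d}) d) = {o1, o2}"
    using tree_level_hd_last[OF strict_mono_on_odds[OF mono2]] by (simp add: o1_def o2_def)
  have high: "high_above ((\<lambda>i. f (2*i+1)) ` {..<2^Suc d}) ((\<lambda>i. f (2*i)) ` {..<2^Suc d})"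
    using horton unfolding power_Suc[of 2 "Suc d"] horton.simps(2)[of "Suc d"]
      even_part_image[OF mono2] odd_part_image[OF mono2] by blast
  have "0 < (2::nat)^d" by simp
  then have idx: "2^d - 1 < 2 * (2::nat)^d" "2 * 2^d - 1 < 2 * (2::nat)^d" by linarith+
  have e_in: "e1 \<in> (\<lambda>i. f (2*i)) ` {..<2^Suc d}" "e2 \<in> (\<lambda>i. f (2*i)) ` {..<2^Suc d}"
    unfolding e1_def e2_def using idx by auto
  have o_in: "o1 \<in> (\<lambda>i. f (2*i+1)) ` {..<2^Suc d}" "o2 \<in> (\<lambda>i. f (2*i+1)) ` {..<2^Suc d}"
    unfolding o1_def o2_def by (auto intro: image_eqI[of _ _ 0] image_eqI[of _ _ "2^d"])
  have e_less: "fst e1 < fst e2" and o_less: "fst o1 < fst o2"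
    unfolding e1_def e2_def o1_def o2_def using strict_mono_onD[OF mono2] idx by auto
  have n: "(2::nat)^Suc (Suc d) = 4 * 2^d" by simp
  have left: "fst (f i) \<le> x" if "4 * i < 4 * 2^d" for i
    using slab that unfolding in_middle_slab_def n by auto
  have right: "x \<le> fst (f i)" if "3 * (4 * 2^d) \<le> 4 * i" "i < 4 * 2^d" for i
    using slab that unfolding in_middle_slab_def n by auto
  \<comment> \<open>For four points, \<open>e1\<close> and \<open>o2\<close> are the outermost ones; otherwise \<open>o1\<close> lies in the first
    and \<open>e2\<close> in the last quarter.\<close>
  obtain u v where "u \<in> {fst e1, fst e2, fst o1, fst o2}" "v \<in> {fst e1, fst e2, fst o1, fst o2}"
    and "u \<le> x" "x \<le> v"
  proof (cases "d = 0")
    case True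
    then show thesis
      using that[of "fst e1" "fst o2"] left[of 0] right[of 3] unfolding e1_def o2_def by simp
  next
    case False
    then have "2 \<le> (2::nat)^d" by (cases d) auto
    then show thesis
      using that[of "fst o1" "fst e2"] left[of 1] right[of "2 * (2 * 2^d - 1)"]
      unfolding o1_def e2_def by simp
  qed
  moreover have "snd e1 < line_val o1 o2 (fst e1)" "snd e2 < line_val o1 o2 (fst e2)"
    using high e_in o_in o_less unfolding high_above_def by (metis less_irrefl)+
  moreover have "line_val e1 e2 (fst o1) < snd o1" "line_val e1 e2 (fst o2) < snd o2"
    using high e_in o_in e_less unfolding high_above_def by (metis less_irrefl)+
  ultimately have "line_val e1 e2 x < line_val o1 o2 x"
    using e_less o_less by (intro line_val_less_between) auto
  then show ?thesis
    unfolding last_eq hd_eq using vertex_line_pair[OF e_less] vertex_line_pair[OF o_less] by simp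
qed

lemma vertex_lines_sorted:
  fixes f :: "nat \<Rightarrow> point"
  assumes "strict_mono_on {..<2^Suc d} (fst \<circ> f)"
    and "horton (Suc d) (f ` {..<2^Suc d})"
    and "in_middle_slab f (2^Suc d) x"
  shows "sorted_wrt (<) (map (\<lambda>V. vertex_line V x) (tree_level (f ` {..<2^Suc d}) d))"
  using assms
proof (induction d arbitrary: f)
  case 0
  then show ?case by simp
next
  case (Suc d)
  let ?E = "(\<lambda>i. f (2*i)) ` {..<2^Suc d}" and ?O = "(\<lambda>i. f (2*i+1)) ` {..<2^Suc d}"
  let ?g = "\<lambda>V. vertex_line V x"
  have mono: "strict_mono_on {..<2 * 2^Suc d} (fst \<circ> f)"
    using Suc.prems(1) unfolding power_Suc[of 2 "Suc d"] .
  have horton: "horton (Suc d) ?E" "horton (Suc d) ?O"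
    using Suc.prems(2) unfolding power_Suc[of 2 "Suc d"] horton.simps(2)[of "Suc d"]
      even_part_image[OF mono] odd_part_image[OF mono] by blast+
  have slab: "in_middle_slab f (2 * 2^Suc d) x"
    using Suc.prems(3) unfolding power_Suc[of 2 "Suc d"] .
  have sorted_E: "sorted_wrt (<) (map ?g (tree_level ?E d))"
    using Suc.IH[OF strict_mono_on_evens[OF mono] horton(1) in_middle_slab_evens[OF slab]] .
  have sorted_O: "sorted_wrt (<) (map ?g (tree_level ?O d))"
  proof (cases d)
    case 0
    then show ?thesis by simp
  next
    case (Suc d')
    then have "4 dvd (2::nat)^Suc d" by (simp add: dvd_def)
    from in_middle_slab_odds[OF this slab] show ?thesis
      using Suc.IH[OF strict_mono_on_odds[OF mono] horton(2)] by blast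
  qed
  have "?g V < ?g W" if "V \<in> set (tree_level ?E d)" "W \<in> set (tree_level ?O d)" for V W
  proof -
    have "?g V \<le> ?g (last (tree_level ?E d))"
      using sorted_wrt_less_hd_last(2)[OF sorted_E] that(1) by (simp add: last_map)
    also have "\<dots> < ?g (hd (tree_level ?O d))"
      by (rule last_even_line_below_first_odd_line[OF Suc.prems])
    also have "\<dots> \<le> ?g W"
      using sorted_wrt_less_hd_last(1)[OF sorted_O] that(2) by (simp add: hd_map)
    finally show ?thesis .
  qed
  moreover have "tree_level (f ` {..<2^Suc (Suc d)}) (Suc d) = tree_level ?E d @ tree_level ?O d"
    unfolding power_Suc[of 2 "Suc d"] by (rule tree_level_image_Suc[OF mono])
  ultimately show ?case
    using sorted_E sorted_O by (simp only: map_append sorted_wrt_append set_map) blast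
qed

lemma xsorted_enumeration:
  assumes "finite S" "distinct_x S"
  shows "strict_mono_on {..<card S} (fst \<circ> (!) (xsorted S))"
    and "S = (!) (xsorted S) ` {..<card S}"
proof -
  have xs: "sorted_wrt (<) (map fst (xsorted S))" "set (xsorted S) = S" "length (xsorted S) = card S"
    using xsorted_eq_iff[OF assms, of "xsorted S"] by simp_all
  then show "strict_mono_on {..<card S} (fst \<circ> (!) (xsorted S))"
    by (intro strict_mono_onI) (auto simp: sorted_wrt_iff_nth_less)
  show "S = (!) (xsorted S) ` {..<card S}"
    using xs(2,3) by (auto simp: set_conv_nth)
qed

theorem lemma1:
  fixes k n :: nat and P :: "point set"
  assumes "k \<ge> 2"
    and "n = 2 ^ k"
    and "horton k P"
    and "\<forall>p\<in>P. fst p \<in> \<int> \<and> snd p \<in> \<int>"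
  shows "(let T1 = tree_level P (k - 1);
              a = fst (xsorted P ! (n div 4));
              b = fst (xsorted P ! (3 * n div 4 - 1))
          in (\<forall>i j x. i < length T1 \<and> j < length T1 \<and> i \<noteq> j \<and> a \<le> x \<and> x \<le> b
                 \<longrightarrow> vertex_line (T1 ! i) x \<noteq> vertex_line (T1 ! j) x) \<and>
             (\<forall>i j x. i < j \<and> j < length T1 \<and> a \<le> x \<and> x \<le> b
                 \<longrightarrow> vertex_line (T1 ! i) x < vertex_line (T1 ! j) x))"
proof -
  obtain d where k: "k = Suc d" using assms(1) by (cases k) auto
  have P: "finite P" "card P = n" "distinct_x P" using assms(2,3) k by simp_all
  let ?f = "(!) (xsorted P)"
  have mono: "strict_mono_on {..<n} (fst \<circ> ?f)" and P_eq: "P = ?f ` {..<n}"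
    using xsorted_enumeration[OF P(1,3)] P(2) by simp_all
  have "(2::nat)^2 dvd 2^k" using assms(1) by (rule le_imp_power_dvd)
  then have "4 dvd n" using assms(2) by simp
  have sorted: "sorted_wrt (<) (map (\<lambda>V. vertex_line V x) (tree_level P (k - 1)))"
    if "fst (xsorted P ! (n div 4)) \<le> x" "x \<le> fst (xsorted P ! (3 * n div 4 - 1))" for x
    using vertex_lines_sorted[of d ?f x] mono assms(2,3) P_eq k
      in_middle_slab_if_between[OF mono \<open>4 dvd n\<close>] that
    by simp
  have less: "vertex_line (tree_level P (k - 1) ! i) x < vertex_line (tree_level P (k - 1) ! j) x"
    if "i < j" "j < 2^(k - 1)"
      and "fst (xsorted P ! (n div 4)) \<le> x" "x \<le> fst (xsorted P ! (3 * n div 4 - 1))" for i j x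
    using sorted[OF that(3,4)] that(1,2) by (simp add: sorted_wrt_iff_nth_less)
  show ?thesis
    unfolding Let_def length_tree_level
  proof (intro conjI allI impI)
    fix i j :: nat and x :: real
    assume "i < 2^(k - 1) \<and> j < 2^(k - 1) \<and> i \<noteq> j \<and> fst (xsorted P ! (n div 4)) \<le> x
              \<and> x \<le> fst (xsorted P ! (3 * n div 4 - 1))"
    then show "vertex_line (tree_level P (k - 1) ! i) x \<noteq> vertex_line (tree_level P (k - 1) ! j) x"
      using less[of i j x] less[of j i x] by (cases "i < j") auto
  qed (use less in blast)
qed

end
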